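(* Let $T,V,\alpha,\Omega,G$ satisfy the Standing Assumption (G), let $\mathcal O\subseteq\mathbb{C}$ be open and let $(\varphi_\kappa)_{\kappa\in\mathcal O}$ be holomorphic functions $\varphi_\kappa:\Omega\to\mathbb{C}$ satisfying $|\varphi_\kappa(z)|\le A(\kappa)e^{B(\kappa)|z|}$ for $z\in\Omega$, with $A(\kappa),B(\kappa)\ge0$ depending continuously on $\kappa$. If for every $z\in\Omega$ the map $\mathcal O\ni\kappa\mapsto\varphi_\kappa(z)$ is holomorphic, then for every fixed $t\in(0,T)$ and $x\in\mathbb{R}$ the map $\mathcal O\ni\kappa\mapsto\Psi(t,x;\varphi_\kappa)$ is holomorphic.
   Context: Double sector: $S_\alpha:=\{0\}\cup\{z\ne0:\mathrm{Arg}(z)\in[0,\alpha]\cup[\pi,\pi+\alpha]\}$, $\mathrm{Arg}\in[0,2\pi)$. $\mathrm{AC}_{1,2}((0,T)\times\mathbb{R})$: functions $\Psi$ with $\Psi(\cdot,x)$ absolutely continuous on $(0,T)$ for all $x$ and $\Psi(t,\cdot),\partial_x\Psi(t,\cdot)$ absolutely continuous on $\mathbb{R}$ for all $t$. Standing Assumption (G): $T\in(0,\infty]$, $V:(0,T)\times\mathbb{R}\to\mathbb{C}$, $\alpha\in(0,\frac\pi2)$, $\Omega\supseteq S_\alpha$ open, $G:(0,T)\times\mathbb{R}\times\Omega\to\mathbb{C}$ holomorphic in $z$, such that: (i) for every $z\in S_\alpha$, $G(\cdot,\cdot,z)\in\mathrm{AC}_{1,2}$ and $i\partial_tG=(-\partial_x^2+V)G$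 a.e.; (ii) there is an absolutely continuous $a:(0,T)\to(0,\infty)$ with $a(t)\to\infty$ as $t\to0^+$ such that $G(t,x,z)=e^{ia(t)(z-x)^2}\widetilde G(t,x,z)$ with $|\widetilde G(t,x,z)|\le A_0(t,x)e^{B_0(t,x)|z|}$ on $(0,T)\times\mathbb{R}\times\Omega$, $A_0,B_0\ge0$ continuous, and $A_0/\sqrt a$, $B_0$ extending continuously to $[0,T)\times\mathbb{R}$; (iii) $\lim_{t\to0^+}\widetilde G(t,x,z)/\sqrt{a(t)}=1/\sqrt{i\pi}$ for all $x,z$; (iv) $|\partial_x\widetilde G|,|\partial_x^2\widetilde G|,|\partial_t\widetilde G|\le A_1(t,x)e^{B_1(t,x)|z|}$ for $z\in S_\alpha$, with $A_1\ge0$ locally integrable and $B_1\ge0$ continuous. For $F$ holomorphic on $\Omega$ with an exponential bound $|F(z)|\le Ae^{B|z|}$, $\Psi(t,x;F):=\lim_{\varepsilon\to0^+}\int_{\mathbb{R}}e^{-\varepsilon y^2}G(t,x,y)F(y)dy$ for $t\in(0,T)$. *)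

theory Defs
  imports "HOL-Analysis.Analysis" "HOL-Complex_Analysis.Complex_Analysis"
begin

definition double_sector :: "real \<Rightarrow> complex set" where
  "double_sector \<alpha> = {0} \<union>
     {z. \<exists>r \<theta>. r > 0 \<and> z = complex_of_real r * cis \<theta> \<and>
              (\<theta> \<in> {0..\<alpha>} \<or> \<theta> \<in> {pi..pi + \<alpha>})}"

definition abs_cont_on_interval :: "real \<Rightarrow> real \<Rightarrow> (real \<Rightarrow> 'a::real_normed_vector) \<Rightarrow> bool" where
  "abs_cont_on_interval a b f \<longleftrightarrow>
     (\<forall>\<epsilon>>0. \<exists>\<delta>>0. \<forall>(n::nat) (l::nat \<Rightarrow> real) (u::nat \<Rightarrow> real).
        (\<forall>k<n. a \<le> l k \<and> l k \<le> u k \<and> u k \<le> b) \<and>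
        (\<forall>j<n. \<forall>k<n. j \<noteq> k \<longrightarrow> {l j<..<u j} \<inter> {l k<..<u k} = {}) \<and>
        (\<Sum>k<n. u k - l k) < \<delta>
        \<longrightarrow> (\<Sum>k<n. norm (f (u k) - f (l k))) < \<epsilon>)"

definition abs_cont_on :: "real set \<Rightarrow> (real \<Rightarrow> 'a::real_normed_vector) \<Rightarrow> bool" where
  "abs_cont_on I f \<longleftrightarrow> (\<forall>a b. a \<le> b \<longrightarrow> {a..b} \<subseteq> I \<longrightarrow> abs_cont_on_interval a b f)"

definition time_int :: "ereal \<Rightarrow> real set" where
  "time_int T = {t. 0 < t \<and> ereal t < T}"

definition dx :: "(real \<Rightarrow> real \<Rightarrow> complex) \<Rightarrow> real \<Rightarrow> real \<Rightarrow> complex" where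
  "dx \<Psi> t x = vector_derivative (\<lambda>y. \<Psi> t y) (at x)"

definition AC12 :: "ereal \<Rightarrow> (real \<Rightarrow> real \<Rightarrow> complex) \<Rightarrow> bool" where
  "AC12 T \<Psi> \<longleftrightarrow>
     (\<forall>x. abs_cont_on (time_int T) (\<lambda>t. \<Psi> t x)) \<and>
     (\<forall>t \<in> time_int T. abs_cont_on UNIV (\<lambda>x. \<Psi> t x) \<and>
        (\<forall>x. (\<lambda>y. \<Psi> t y) differentiable (at x)) \<and>
        abs_cont_on UNIV (\<lambda>x. dx \<Psi> t x))"

definition solves_schroedinger_ae ::
    "ereal \<Rightarrow> (real \<Rightarrow> real \<Rightarrow> complex) \<Rightarrow> (real \<Rightarrow> real \<Rightarrow> complex) \<Rightarrow> bool" where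
  "solves_schroedinger_ae T V \<Psi> \<longleftrightarrow>
     (AE p in (lborel :: (real \<times> real) measure). fst p \<in> time_int T \<longrightarrow>
        (\<exists>gt gxx. ((\<lambda>s. \<Psi> s (snd p)) has_vector_derivative gt) (at (fst p)) \<and>
                  ((\<lambda>y. dx \<Psi> (fst p) y) has_vector_derivative gxx) (at (snd p)) \<and>
                  \<i> * gt = - gxx + V (fst p) (snd p) * \<Psi> (fst p) (snd p)))"

definition assumption_G ::
    "ereal \<Rightarrow> (real \<Rightarrow> real \<Rightarrow> complex) \<Rightarrow> real \<Rightarrow> complex set
       \<Rightarrow> (real \<Rightarrow> real \<Rightarrow> complex \<Rightarrow> complex) \<Rightarrow> bool" where
  "assumption_G T V \<alpha> \<Omega> G \<longleftrightarrow>
     T > 0 \<and> 0 < \<alpha> \<and> \<alpha> < pi / 2 \<and> open \<Omega> \<and> double_sector \<alpha> \<subseteq> \<Omega> \<and>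
     (\<forall>t \<in> time_int T. \<forall>x. (\<lambda>z. G t x z) holomorphic_on \<Omega>) \<and>
     \<comment> \<open>(i)\<close>
     (\<forall>z \<in> double_sector \<alpha>.
        AC12 T (\<lambda>t x. G t x z) \<and> solves_schroedinger_ae T V (\<lambda>t x. G t x z)) \<and>
     \<comment> \<open>(ii)--(iv)\<close>
     (\<exists>(a :: real \<Rightarrow> real) (Gt :: real \<Rightarrow> real \<Rightarrow> complex \<Rightarrow> complex)
        (A0 :: real \<Rightarrow> real \<Rightarrow> real) (B0 :: real \<Rightarrow> real \<Rightarrow> real)
        (A1 :: real \<Rightarrow> real \<Rightarrow> real) (B1 :: real \<Rightarrow> real \<Rightarrow> real).
        \<comment> \<open>(ii)\<close>
        abs_cont_on (time_int T) a \<and>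
        (\<forall>t \<in> time_int T. a t > 0) \<and>
        filterlim a at_top (at_right 0) \<and>
        (\<forall>t \<in> time_int T. \<forall>x. \<forall>z \<in> \<Omega>.
           G t x z = exp (\<i> * complex_of_real (a t) * (z - complex_of_real x)^2) * Gt t x z \<and>
           norm (Gt t x z) \<le> A0 t x * exp (B0 t x * norm z)) \<and>
        (\<forall>t \<in> time_int T. \<forall>x. A0 t x \<ge> 0 \<and> B0 t x \<ge> 0) \<and>
        continuous_on (time_int T \<times> UNIV) (\<lambda>(t, x). A0 t x) \<and>
        continuous_on (time_int T \<times> UNIV) (\<lambda>(t, x). B0 t x) \<and>
        (\<exists>h. continuous_on ({t. 0 \<le> t \<and> ereal t < T} \<times> UNIV) h \<and>
             (\<forall>t \<in> time_int T. \<forall>x. h (t, x) = A0 t x / sqrt (a t))) \<and>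
        (\<exists>h. continuous_on ({t. 0 \<le> t \<and> ereal t < T} \<times> UNIV) h \<and>
             (\<forall>t \<in> time_int T. \<forall>x. h (t, x) = B0 t x)) \<and>
        \<comment> \<open>(iii)\<close>
        (\<forall>x. \<forall>z \<in> \<Omega>. ((\<lambda>t. Gt t x z / complex_of_real (sqrt (a t)))
                         \<longlongrightarrow> 1 / csqrt (\<i> * complex_of_real pi)) (at_right 0)) \<and>
        \<comment> \<open>(iv)\<close>
        (\<forall>t \<in> time_int T. \<forall>x. A1 t x \<ge> 0 \<and> B1 t x \<ge> 0) \<and>
        (\<forall>K. compact K \<and> K \<subseteq> time_int T \<times> UNIV \<longrightarrow> (\<lambda>(t, x). A1 t x) integrable_on K) \<and>
        continuous_on (time_int T \<times> UNIV) (\<lambda>(t, x). B1 t x) \<and>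
        (\<forall>t \<in> time_int T. \<forall>x. \<forall>z \<in> double_sector \<alpha>.
           (\<forall>d. ((\<lambda>y. Gt t y z) has_vector_derivative d) (at x) \<longrightarrow>
                  norm d \<le> A1 t x * exp (B1 t x * norm z)) \<and>
           (\<forall>d. ((\<lambda>y. vector_derivative (\<lambda>w. Gt t w z) (at y)) has_vector_derivative d) (at x)
                  \<longrightarrow> norm d \<le> A1 t x * exp (B1 t x * norm z)) \<and>
           (\<forall>d. ((\<lambda>s. Gt s x z) has_vector_derivative d) (at t) \<longrightarrow>
                  norm d \<le> A1 t x * exp (B1 t x * norm z))))"

definition Psi :: "(real \<Rightarrow> real \<Rightarrow> complex \<Rightarrow> complex) \<Rightarrow> (complex \<Rightarrow> complex)
                    \<Rightarrow> real \<Rightarrow> real \<Rightarrow> complex" where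
  "Psi G F t x = Lim (at_right 0)
     (\<lambda>\<epsilon>::real. LINT y|lborel. complex_of_real (exp (- \<epsilon> * y^2))
                       * G t x (complex_of_real y) * F (complex_of_real y))"

end

theory Submission
  imports Defs "HOL-Probability.Distributions" "HOL-Real_Asymp.Real_Asymp"
begin

(* For real y the kernel G(t,x,y) is only of exponential type, so the integral defining
   Psi converges merely as an oscillatory limit. On the line z = s(1 + i tau), which lies in
   the double sector, the Gaussian factor exp(i a (z - x)^2) of G instead decays like
   exp(-2 a tau s^2). As G(t,x,.) and phi_kappa are holomorphic on the sector, Cauchy's
   theorem rotates each regularised integral onto this line (the regulariser exp(-eps z^2)
   makes the connecting vertical segments vanish), and dominated convergence lets eps -> 0:
   Psi(t,x;phi_kappa) is the absolutely convergent integral of G(t,x,z) phi_kappa(z) over the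
   rotated line. Holomorphy in kappa then follows by differentiating under the integral sign,
   the difference quotients being dominated via the Cauchy estimate and the local
   boundedness of A and B. *)

lemma integrable_exp_neg_square_plus_abs:
  fixes \<delta> K :: real
  assumes "\<delta> > 0"
  shows "integrable lborel (\<lambda>s. exp (- \<delta> * s\<^sup>2 + K * \<bar>s\<bar>))"
proof -
  define \<sigma> where "\<sigma> = 1 / sqrt \<delta>"
  have \<sigma>: "\<sigma> > 0" "\<sigma>\<^sup>2 = 1 / \<delta>"
    using assms by (simp_all add: \<sigma>_def power_divide)
  have "sqrt (2 * pi / \<delta>) * normal_density 0 \<sigma> s = exp (- (\<delta>/2) * s\<^sup>2)" for s
    unfolding normal_density_def \<sigma>(2) using assms \<sigma>(1) by (simp add: field_simps)
  moreover have "integrable lborel (\<lambda>s. sqrt (2 * pi / \<delta>) * normal_density 0 \<sigma> s)"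
    using \<sigma>(1) by (intro integrable_mult_right integrable_normal_density)
  ultimately have gauss: "integrable lborel (\<lambda>s. exp (K\<^sup>2 / (2 * \<delta>)) * exp (- (\<delta>/2) * s\<^sup>2))"
    by (intro integrable_mult_right) simp
  show ?thesis
  proof (rule Bochner_Integration.integrable_bound[OF gauss])
    show "(\<lambda>s. exp (- \<delta> * s\<^sup>2 + K * \<bar>s\<bar>)) \<in> borel_measurable lborel"
      by measurable
    show "AE s in lborel. norm (exp (- \<delta> * s\<^sup>2 + K * \<bar>s\<bar>))
                           \<le> norm (exp (K\<^sup>2 / (2 * \<delta>)) * exp (- (\<delta>/2) * s\<^sup>2))"
    proof (rule AE_I2)
      fix s :: real
      have "0 \<le> (\<delta> * \<bar>s\<bar> - K)\<^sup>2" by simp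
      then have "- \<delta> * s\<^sup>2 + K * \<bar>s\<bar> \<le> K\<^sup>2 / (2 * \<delta>) + - (\<delta>/2) * s\<^sup>2"
        using assms by (simp add: field_simps power2_eq_square)
      then show "norm (exp (- \<delta> * s\<^sup>2 + K * \<bar>s\<bar>))
                   \<le> norm (exp (K\<^sup>2 / (2 * \<delta>)) * exp (- (\<delta>/2) * s\<^sup>2))"
        by (simp add: exp_add[symmetric])
    qed
  qed
qed

lemma tendsto_integral_symmetric_interval:
  fixes h :: "real \<Rightarrow> complex"
  assumes h: "integrable lborel h"
  shows "(\<lambda>n::nat. integral {- real n..real n} h) \<longlonglongrightarrow> integral\<^sup>L lborel h"
proof -
  have "integral {- real n..real n} h = (LINT y|lborel. indicator {- real n..real n} y *\<^sub>R h y)" for n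
  proof -
    have "set_integrable lborel {- real n..real n} h"
      unfolding set_integrable_def using h by (intro integrable_mult_indicator) auto
    from set_borel_integral_eq_integral(2)[OF this] show ?thesis
      by (simp add: set_lebesgue_integral_def)
  qed
  moreover have "(\<lambda>n. LINT y|lborel. indicator {- real n..real n} y *\<^sub>R h y) \<longlonglongrightarrow> integral\<^sup>L lborel h"
  proof (rule integral_dominated_convergence[where w="\<lambda>y. norm (h y)"])
    show "AE y in lborel. (\<lambda>n. indicator {- real n..real n} y *\<^sub>R h y) \<longlonglongrightarrow> h y"
    proof (rule AE_I2)
      fix y :: real
      obtain N :: nat where "\<bar>y\<bar> \<le> real N" using real_arch_simple by blast
      then have "\<forall>n\<ge>N. indicator {- real n..real n} y *\<^sub>R h y = h y"
        by (auto simp: indicator_def abs_le_iff)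
      then show "(\<lambda>n. indicator {- real n..real n} y *\<^sub>R h y) \<longlonglongrightarrow> h y"
        by (intro tendsto_eventually) (auto simp: eventually_sequentially)
    qed
  qed (use h in \<open>auto simp: indicator_def\<close>)
  ultimately show ?thesis by simp
qed

lemma integral_dominated_convergence_at_within:
  fixes s :: "'a::first_countable_topology \<Rightarrow> 'b \<Rightarrow> 'c::{banach, second_countable_topology}"
  assumes "x islimpt S"
    and meas: "\<And>k. k \<in> S - {x} \<Longrightarrow> s k \<in> borel_measurable M"
    and w: "integrable M w"
    and lim: "\<And>y. ((\<lambda>k. s k y) \<longlongrightarrow> f y) (at x within S)"
    and bound: "\<And>k y. k \<in> S - {x} \<Longrightarrow> norm (s k y) \<le> w y"
  shows "((\<lambda>k. integral\<^sup>L M (s k)) \<longlongrightarrow> integral\<^sup>L M f) (at x within S)"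
proof -
  have seq: "(\<lambda>i. s (X i) y) \<longlonglongrightarrow> f y" if "\<forall>i. X i \<in> S - {x}" "X \<longlonglongrightarrow> x" for X y
    using lim[of y] that unfolding tendsto_at_iff_sequentially by (simp add: o_def)
  obtain X0 where X0: "\<forall>i. X0 i \<in> S - {x}" "X0 \<longlonglongrightarrow> x"
    using \<open>x islimpt S\<close> islimpt_sequential by blast
  have f: "f \<in> borel_measurable M"
    by (rule borel_measurable_LIMSEQ_metric[where f="\<lambda>i. s (X0 i)"]) (use X0 meas seq in auto)
  show ?thesis
    unfolding tendsto_at_iff_sequentially o_def
  proof (intro allI impI)
    fix X assume X: "\<forall>i. X i \<in> S - {x}" "X \<longlonglongrightarrow> x"
    show "(\<lambda>i. integral\<^sup>L M (s (X i))) \<longlonglongrightarrow> integral\<^sup>L M f"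
    proof (rule integral_dominated_convergence[OF f _ w])
      show "s (X i) \<in> borel_measurable M" for i using X meas by auto
      show "AE y in M. (\<lambda>i. s (X i) y) \<longlonglongrightarrow> f y" using X seq by auto
      show "AE y in M. norm (s (X i) y) \<le> w y" for i using X bound by auto
    qed
  qed
qed

lemma norm_diff_le_of_holomorphic_bound:
  fixes h :: "complex \<Rightarrow> complex"
  assumes holo: "h holomorphic_on cball k0 (2 * r)" and r: "r > 0"
    and M: "\<And>k. k \<in> cball k0 (2 * r) \<Longrightarrow> norm (h k) \<le> M"
    and k: "k \<in> ball k0 r"
  shows "norm (h k - h k0) \<le> M / r * norm (k - k0)"
proof (rule field_differentiable_bound[where S="ball k0 r" and f'="deriv h"])
  have open_holo: "h holomorphic_on ball k0 (2 * r)"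
    using holo ball_subset_cball holomorphic_on_subset by blast
  show "(h has_field_derivative deriv h z) (at z within ball k0 r)" if "z \<in> ball k0 r" for z
    using that r by (intro holomorphic_derivI[OF open_holo]) auto
  show "norm (deriv h z) \<le> M / r" if z: "z \<in> ball k0 r" for z
  proof -
    have cb: "cball z r \<subseteq> cball k0 (2 * r)"
    proof
      fix u assume "u \<in> cball z r"
      then have "dist k0 u \<le> dist k0 z + dist z u" "dist k0 z < r" "dist z u \<le> r"
        using z dist_triangle by auto
      then show "u \<in> cball k0 (2 * r)" by simp
    qed
    have "norm ((deriv ^^ 1) h z) \<le> fact 1 * M / r ^ 1"
    proof (rule Cauchy_inequality)
      show "h holomorphic_on ball z r"
        using holo cb ball_subset_cball holomorphic_on_subset by blast
      show "continuous_on (cball z r) h"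
        using holo cb holomorphic_on_imp_continuous_on holomorphic_on_subset by blast
      show "norm (h x) \<le> M" if "norm (z - x) = r" for x
        using that cb M by (auto simp: dist_norm)
    qed (use r in auto)
    then show ?thesis by simp
  qed
qed (use k r in auto)

lemma has_field_derivative_lebesgue_integral:
  fixes F :: "complex \<Rightarrow> 'a \<Rightarrow> complex"
  assumes \<rho>: "\<rho> > 0"
    and holo: "\<And>y. (\<lambda>\<kappa>. F \<kappa> y) holomorphic_on cball \<kappa>0 (2 * \<rho>)"
    and meas: "\<And>\<kappa>. \<kappa> \<in> cball \<kappa>0 (2 * \<rho>) \<Longrightarrow> F \<kappa> \<in> borel_measurable M"
    and w: "integrable M w"
    and bound: "\<And>\<kappa> y. \<kappa> \<in> cball \<kappa>0 (2 * \<rho>) \<Longrightarrow> norm (F \<kappa> y) \<le> w y"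
  shows "((\<lambda>\<kappa>. integral\<^sup>L M (F \<kappa>)) has_field_derivative
           integral\<^sup>L M (\<lambda>y. deriv (\<lambda>\<kappa>. F \<kappa> y) \<kappa>0)) (at \<kappa>0)"
proof -
  have \<kappa>0: "\<kappa>0 \<in> cball \<kappa>0 (2 * \<rho>)" using \<rho> by simp
  define Q where "Q = (\<lambda>\<kappa> y. (F \<kappa> y - F \<kappa>0 y) / (\<kappa> - \<kappa>0))"
  define D where "D = (\<lambda>y. deriv (\<lambda>\<kappa>. F \<kappa> y) \<kappa>0)"
  have "((\<lambda>\<kappa>. integral\<^sup>L M (Q \<kappa>)) \<longlongrightarrow> integral\<^sup>L M D) (at \<kappa>0 within ball \<kappa>0 \<rho>)"
  proof (rule integral_dominated_convergence_at_within[where w="\<lambda>y. w y / \<rho>"])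
    show "\<kappa>0 islimpt ball \<kappa>0 \<rho>" using \<rho> by (simp add: islimpt_ball)
    show "Q \<kappa> \<in> borel_measurable M" if "\<kappa> \<in> ball \<kappa>0 \<rho> - {\<kappa>0}" for \<kappa>
    proof -
      have "F \<kappa> \<in> borel_measurable M" "F \<kappa>0 \<in> borel_measurable M"
        using that \<rho> \<kappa>0 by (auto intro!: meas)
      then show ?thesis
        unfolding Q_def by (intro borel_measurable_divide borel_measurable_diff) auto
    qed
    show "integrable M (\<lambda>y. w y / \<rho>)" using w by simp
    show "((\<lambda>\<kappa>. Q \<kappa> y) \<longlongrightarrow> D y) (at \<kappa>0 within ball \<kappa>0 \<rho>)" for y
    proof -
      have "(\<lambda>\<kappa>. F \<kappa> y) holomorphic_on ball \<kappa>0 (2 * \<rho>)"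
        using holo ball_subset_cball holomorphic_on_subset by blast
      then have "((\<lambda>\<kappa>. F \<kappa> y) has_field_derivative D y) (at \<kappa>0)"
        unfolding D_def using \<rho> by (intro holomorphic_derivI) auto
      then show ?thesis
        unfolding Q_def has_field_derivative_iff by (rule tendsto_within_subset) simp
    qed
    show "norm (Q \<kappa> y) \<le> w y / \<rho>" if \<kappa>: "\<kappa> \<in> ball \<kappa>0 \<rho> - {\<kappa>0}" for \<kappa> y
    proof -
      have "norm (F \<kappa> y - F \<kappa>0 y) \<le> w y / \<rho> * norm (\<kappa> - \<kappa>0)"
        using \<kappa> by (intro norm_diff_le_of_holomorphic_bound[OF holo \<rho>] bound) auto
      then show ?thesis
        using \<kappa> by (simp add: Q_def norm_divide divide_le_eq)
    qed
  qed
  moreover have "\<forall>\<^sub>F \<kappa> in at \<kappa>0 within ball \<kappa>0 \<rho>.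
      integral\<^sup>L M (Q \<kappa>) = (integral\<^sup>L M (F \<kappa>) - integral\<^sup>L M (F \<kappa>0)) / (\<kappa> - \<kappa>0)"
  proof -
    have integrable: "integrable M (F \<kappa>)" if "\<kappa> \<in> cball \<kappa>0 (2 * \<rho>)" for \<kappa>
      using that by (intro Bochner_Integration.integrable_bound[OF w meas] AE_I2
                       order_trans[OF bound[OF that]]) auto
    have "integral\<^sup>L M (Q \<kappa>) = (integral\<^sup>L M (F \<kappa>) - integral\<^sup>L M (F \<kappa>0)) / (\<kappa> - \<kappa>0)"
      if "\<kappa> \<in> ball \<kappa>0 \<rho>" for \<kappa>
      using that integrable[of \<kappa>] integrable[OF \<kappa>0] \<rho>
      by (simp add: Q_def integral_divide_zero Bochner_Integration.integral_diff)
    then show ?thesis by (auto simp: eventually_at_filter)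
  qed
  ultimately have "((\<lambda>\<kappa>. (integral\<^sup>L M (F \<kappa>) - integral\<^sup>L M (F \<kappa>0)) / (\<kappa> - \<kappa>0))
                     \<longlongrightarrow> integral\<^sup>L M D) (at \<kappa>0)"
    using \<rho> by (simp add: tendsto_cong at_within_open[of \<kappa>0 "ball \<kappa>0 \<rho>", symmetric])
  then show ?thesis
    unfolding D_def by (simp add: has_field_derivative_iff)
qed

lemma holomorphic_on_lebesgue_integral:
  fixes F :: "complex \<Rightarrow> 'a \<Rightarrow> complex"
  assumes U: "open U"
    and holo: "\<And>y. (\<lambda>\<kappa>. F \<kappa> y) holomorphic_on U"
    and meas: "\<And>\<kappa>. \<kappa> \<in> U \<Longrightarrow> F \<kappa> \<in> borel_measurable M"
    and dom: "\<And>\<kappa>0. \<kappa>0 \<in> U \<Longrightarrow> \<exists>r>0. \<exists>w. cball \<kappa>0 r \<subseteq> U \<and> integrable M w \<and>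
                                          (\<forall>\<kappa>\<in>cball \<kappa>0 r. \<forall>y. norm (F \<kappa> y) \<le> w y)"
  shows "(\<lambda>\<kappa>. integral\<^sup>L M (F \<kappa>)) holomorphic_on U"
  unfolding holomorphic_on_open[OF U]
proof (intro ballI exI)
  fix \<kappa>0 assume "\<kappa>0 \<in> U"
  then obtain r w where r: "r > 0" "cball \<kappa>0 r \<subseteq> U" and w: "integrable M w"
    and bound: "\<And>\<kappa> y. \<kappa> \<in> cball \<kappa>0 r \<Longrightarrow> norm (F \<kappa> y) \<le> w y"
    using dom by blast
  show "((\<lambda>\<kappa>. integral\<^sup>L M (F \<kappa>)) has_field_derivative
          integral\<^sup>L M (\<lambda>y. deriv (\<lambda>\<kappa>. F \<kappa> y) \<kappa>0)) (at \<kappa>0)"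
    by (rule has_field_derivative_lebesgue_integral[where \<rho> = "r / 2", OF _ _ _ w])
      (use r holomorphic_on_subset[OF holo] in \<open>auto intro: meas bound\<close>)
qed

definition wedge :: "real \<Rightarrow> complex set" where
  "wedge \<tau> = {z. 0 \<le> Re z \<and> 0 \<le> Im z \<and> Im z \<le> \<tau> * Re z}"

definition slope_sector :: "real \<Rightarrow> complex set" where
  "slope_sector \<tau> = wedge \<tau> \<union> uminus ` wedge \<tau>"

lemma mem_slope_sector_iff: "z \<in> slope_sector \<tau> \<longleftrightarrow> z \<in> wedge \<tau> \<or> - z \<in> wedge \<tau>"
  by (auto simp: slope_sector_def image_iff) (metis minus_minus)

lemma uminus_in_slope_sector_iff [simp]: "- z \<in> slope_sector \<tau> \<longleftrightarrow> z \<in> slope_sector \<tau>"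
  by (auto simp: mem_slope_sector_iff)

lemma convex_wedge: "convex (wedge \<tau>)"
proof -
  have "wedge \<tau> = {z. Re z \<ge> 0} \<inter> {z. Im z \<ge> 0} \<inter> {z. inner (Complex (- \<tau>) 1) z \<le> 0}"
    by (auto simp: wedge_def inner_complex_def)
  then show ?thesis
    by (simp add: convex_Int convex_halfspace_Re_ge convex_halfspace_Im_ge convex_halfspace_le)
qed

lemma ray_in_wedge: "0 \<le> s \<Longrightarrow> 0 \<le> \<sigma> \<Longrightarrow> \<sigma> \<le> \<tau> \<Longrightarrow> of_real s * Complex 1 \<sigma> \<in> wedge \<tau>"
  by (simp add: wedge_def mult.commute mult_right_mono)

lemma line_in_slope_sector:
  assumes "0 \<le> \<sigma>" "\<sigma> \<le> \<tau>"
  shows "of_real s * Complex 1 \<sigma> \<in> slope_sector \<tau>"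
proof (cases "s \<ge> 0")
  case True
  then show ?thesis using assms ray_in_wedge by (auto simp: mem_slope_sector_iff)
next
  case False
  then have "of_real (- s) * Complex 1 \<sigma> \<in> wedge \<tau>" using assms by (intro ray_in_wedge) auto
  then show ?thesis by (simp add: mem_slope_sector_iff)
qed

lemma closed_segment_on_line_subset_slope_sector:
  assumes "0 \<le> \<sigma>" "\<sigma> \<le> \<tau>"
  shows "closed_segment (of_real a * Complex 1 \<sigma>) (of_real b * Complex 1 \<sigma>) \<subseteq> slope_sector \<tau>"
proof
  fix z assume "z \<in> closed_segment (of_real a * Complex 1 \<sigma>) (of_real b * Complex 1 \<sigma>)"
  then obtain u where "z = (1 - u) *\<^sub>R (of_real a * Complex 1 \<sigma>) + u *\<^sub>R (of_real b * Complex 1 \<sigma>)"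
    unfolding closed_segment_def by blast
  then have "z = of_real ((1 - u) * a + u * b) * Complex 1 \<sigma>"
    by (simp add: scaleR_conv_of_real algebra_simps)
  then show "z \<in> slope_sector \<tau>" using line_in_slope_sector[OF assms] by (simp only:)
qed

lemma convex_hull_triangle_subset_slope_sector:
  assumes "0 \<le> \<tau>" "0 \<le> R" "e \<in> {1, -1}"
  shows "convex hull {0, e * of_real R, e * (of_real R * Complex 1 \<tau>)} \<subseteq> slope_sector \<tau>"
proof -
  have vertices: "{0, of_real R, of_real R * Complex 1 \<tau>} \<subseteq> wedge \<tau>"
    using assms ray_in_wedge[of R 0 \<tau>] ray_in_wedge[of R \<tau> \<tau>] by (auto simp: wedge_def)
  show ?thesis
  proof (cases "e = 1")
    case True
    have "convex hull {0, e * of_real R, e * (of_real R * Complex 1 \<tau>)} \<subseteq> wedge \<tau>"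
      using True vertices convex_wedge by (simp add: hull_minimal)
    then show ?thesis by (auto simp: slope_sector_def)
  next
    case False
    then have "e = -1" using assms by simp
    then have "convex hull {0, e * of_real R, e * (of_real R * Complex 1 \<tau>)} \<subseteq> uminus ` wedge \<tau>"
      using vertices convex_negations[OF convex_wedge] by (intro hull_minimal) auto
    then show ?thesis by (auto simp: slope_sector_def)
  qed
qed

lemma slope_sector_subset_double_sector:
  assumes "arctan \<tau> \<le> \<alpha>"
  shows "slope_sector \<tau> \<subseteq> double_sector \<alpha>"
proof
  have polar: "\<exists>\<theta>\<in>{0..\<alpha>}. w = of_real (norm w) * cis \<theta>" if w: "w \<in> wedge \<tau>" "w \<noteq> 0" for w
  proof -
    have "Re w > 0"
    proof (rule ccontr)
      assume "\<not> Re w > 0"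
      with w(1) have "Re w = 0" "Im w = 0" by (auto simp: wedge_def)
      with w(2) show False by (simp add: complex_eq_iff)
    qed
    then have "Arg w = arctan (Im w / Re w)" "0 \<le> Im w / Re w" "Im w / Re w \<le> \<tau>"
      using w(1) by (auto simp: arg_conv_arctan wedge_def divide_le_eq mult.commute)
    then have "Arg w \<in> {0..\<alpha>}"
      using assms arctan_monotone'[of 0 "Im w / Re w"] arctan_monotone'[of "Im w / Re w" \<tau>] by auto
    then show ?thesis
      using rcis_cmod_Arg[of w] unfolding rcis_def by (intro bexI[of _ "Arg w"]) auto
  qed
  fix z assume "z \<in> slope_sector \<tau>"
  then consider "z = 0" | "z \<in> wedge \<tau>" "z \<noteq> 0" | "- z \<in> wedge \<tau>" "z \<noteq> 0"
    by (auto simp: mem_slope_sector_iff)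
  then show "z \<in> double_sector \<alpha>"
  proof cases
    case 2
    with polar obtain \<theta> where "\<theta> \<in> {0..\<alpha>}" "z = of_real (norm z) * cis \<theta>" by blast
    with 2 show ?thesis
      unfolding double_sector_def by (intro UnI2 CollectI exI[of _ "norm z"] exI[of _ \<theta>]) auto
  next
    case 3
    with polar obtain \<theta> where "\<theta> \<in> {0..\<alpha>}" "- z = of_real (norm z) * cis \<theta>" by fastforce
    then have "z = of_real (norm z) * cis (pi + \<theta>)" "pi + \<theta> \<in> {pi..pi + \<alpha>}"
      by (auto simp: cis.ctr complex_eq_iff cos_add sin_add)
    with 3 show ?thesis
      unfolding double_sector_def by (intro UnI2 CollectI exI[of _ "norm z"] exI[of _ "pi + \<theta>"]) auto
  qed (simp add: double_sector_def)
qed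

lemma Re_power2_ge_on_slope_sector:
  assumes "\<tau> \<le> 1/2" "z \<in> slope_sector \<tau>"
  shows "(norm z)\<^sup>2 / 2 \<le> Re (z\<^sup>2)"
proof -
  have "\<tau> * \<bar>Re z\<bar> \<le> \<bar>Re z\<bar> / 2"
    using mult_right_mono[OF assms(1) abs_ge_zero] by simp
  then have "\<bar>Im z\<bar> \<le> \<bar>Re z / 2\<bar>"
    using assms(2) by (auto simp: mem_slope_sector_iff wedge_def)
  then have "(Im z)\<^sup>2 \<le> (Re z / 2)\<^sup>2"
    by (simp only: abs_le_square_iff)
  moreover have "Re (z\<^sup>2) = (Re z)\<^sup>2 - (Im z)\<^sup>2" "(Re z / 2)\<^sup>2 = (Re z)\<^sup>2 / 4"
    by (simp_all add: power2_eq_square)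
  moreover have "(norm z)\<^sup>2 = (Re z)\<^sup>2 + (Im z)\<^sup>2"
    by (rule cmod_power2)
  ultimately show ?thesis using zero_le_power2[of "Im z"] by linarith
qed

lemma Im_shifted_power2_ge_on_slope_sector:
  assumes "z \<in> slope_sector \<tau>"
  shows "- 2 * \<bar>x\<bar> * norm z \<le> Im ((z - of_real x)\<^sup>2)"
proof -
  have "Im ((z - of_real x)\<^sup>2) = 2 * (Re z * Im z) - 2 * (x * Im z)"
    by (simp add: power2_eq_square algebra_simps)
  moreover have "Re z * Im z \<ge> 0"
    using assms by (auto simp: mem_slope_sector_iff wedge_def intro: mult_nonpos_nonpos)
  moreover have "x * Im z \<le> \<bar>x\<bar> * norm z"
  proof -
    have "x * Im z \<le> \<bar>x\<bar> * \<bar>Im z\<bar>" by (simp add: abs_mult[symmetric])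
    also have "\<dots> \<le> \<bar>x\<bar> * norm z" by (simp add: abs_Im_le_cmod mult_left_mono)
    finally show ?thesis .
  qed
  ultimately show ?thesis by linarith
qed

lemma norm_Complex_one_bounds:
  assumes "\<bar>\<sigma>\<bar> \<le> 1"
  shows "1 \<le> norm (Complex 1 \<sigma>)" "norm (Complex 1 \<sigma>) \<le> 2"
proof -
  have n: "norm (Complex 1 \<sigma>) = sqrt (1 + \<sigma>\<^sup>2)" by (simp add: cmod_def)
  show "1 \<le> norm (Complex 1 \<sigma>)" unfolding n by simp
  have "sqrt (1 + \<sigma>\<^sup>2) \<le> sqrt 4"
    using assms by (intro real_sqrt_le_mono) (simp add: abs_square_le_1[symmetric])
  then show "norm (Complex 1 \<sigma>) \<le> 2" unfolding n by simp
qed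

lemma contour_integral_triangle_eq_0:
  assumes "f holomorphic_on convex hull {a, b, c}"
  shows "contour_integral (linepath a b) f + contour_integral (linepath b c) f
           + contour_integral (linepath c a) f = 0"
proof -
  have cont: "continuous_on (convex hull {a, b, c}) f"
    using assms holomorphic_on_imp_continuous_on by blast
  have "closed_segment a b \<subseteq> convex hull {a, b, c}" "closed_segment b c \<subseteq> convex hull {a, b, c}"
    "closed_segment c a \<subseteq> convex hull {a, b, c}"
    by (simp_all add: segment_convex_hull hull_mono)
  then have "f contour_integrable_on linepath a b" "f contour_integrable_on linepath b c"
    "f contour_integrable_on linepath c a"
    using cont by (auto intro!: contour_integrable_continuous_linepath elim: continuous_on_subset)
  then have "(f has_contour_integral (contour_integral (linepath a b) f
               + (contour_integral (linepath b c) f + contour_integral (linepath c a) f)))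
             (linepath a b +++ linepath b c +++ linepath c a)"
    by (intro has_contour_integral_join has_contour_integral_integral valid_path_join) auto
  from has_contour_integral_unique[OF this Cauchy_theorem_triangle[OF assms]] show ?thesis
    by (simp add: add.assoc)
qed

lemma contour_integral_symmetric_linepath:
  fixes f :: "complex \<Rightarrow> complex"
  assumes R: "R > 0" and cont: "continuous_on UNIV (\<lambda>s::real. f (of_real s * \<omega>))"
  shows "contour_integral (linepath (- (of_real R * \<omega>)) (of_real R * \<omega>)) f
           = integral {-R..R} (\<lambda>s. f (of_real s * \<omega>) * \<omega>)"
proof -
  define r where "r = complex_of_real R"
  define J where "J = integral {-R..R} (\<lambda>s. f (of_real s * \<omega>) * \<omega>)"
  have "continuous_on UNIV (\<lambda>s::real. f (of_real s * \<omega>) * \<omega>)"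
    using cont by (intro continuous_intros)
  then have "((\<lambda>s. f (of_real s * \<omega>) * \<omega>) has_integral J) {-R..R}"
    unfolding J_def
    by (meson continuous_on_subset integrable_continuous_real integrable_integral subset_UNIV)
  then have "((\<lambda>z. f (z * \<omega>) * \<omega>) has_contour_integral J) (linepath (-r) r)"
    using R by (subst has_contour_integral_linepath_Reals_iff) (auto simp: r_def)
  moreover have "(\<lambda>t. f (linepath (-r) r t * \<omega>) * \<omega> * (r - - r))
                 = (\<lambda>t. f (linepath (-(r * \<omega>)) (r * \<omega>) t) * (r * \<omega> - - (r * \<omega>)))"
    by (simp add: fun_eq_iff linepath_def scaleR_conv_of_real algebra_simps)
  ultimately have "(f has_contour_integral J) (linepath (-(r * \<omega>)) (r * \<omega>))"
    by (simp add: has_contour_integral_linepath)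
  then show ?thesis unfolding J_def r_def by (rule contour_integral_unique)
qed

text \<open>Cauchy's theorem on the triangles with vertices \<open>0, \<plusminus>R, \<plusminus>R(1 + i\<tau>)\<close>.\<close>

lemma interval_integral_minus_rotated_eq_sides:
  fixes f :: "complex \<Rightarrow> complex"
  assumes \<tau>: "0 \<le> \<tau>" and R: "R > 0" and holo: "f holomorphic_on slope_sector \<tau>"
  shows "integral {-R..R} (\<lambda>y. f (of_real y))
           - integral {-R..R} (\<lambda>s. f (of_real s * Complex 1 \<tau>) * Complex 1 \<tau>)
         = contour_integral (linepath (- of_real R) (- (of_real R * Complex 1 \<tau>))) f
           - contour_integral (linepath (of_real R) (of_real R * Complex 1 \<tau>)) f"
proof -
  define \<omega> where "\<omega> = Complex 1 \<tau>"
  define r where "r = complex_of_real R"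
  define C where "C = (\<lambda>a b. contour_integral (linepath a b) f)"
  have cont: "continuous_on (slope_sector \<tau>) f"
    using holo by (rule holomorphic_on_imp_continuous_on)
  have "f holomorphic_on convex hull {0, r, r * \<omega>}" "f holomorphic_on convex hull {0, -r, -(r * \<omega>)}"
    using convex_hull_triangle_subset_slope_sector[OF \<tau>, of R 1]
      convex_hull_triangle_subset_slope_sector[OF \<tau>, of R "-1"] R
    by (auto simp: r_def \<omega>_def intro: holomorphic_on_subset[OF holo])
  then have Tp: "C 0 r + C r (r * \<omega>) + C (r * \<omega>) 0 = 0"
    and Tm: "C 0 (-r) + C (-r) (-(r * \<omega>)) + C (-(r * \<omega>)) 0 = 0"
    unfolding C_def by (simp_all only: contour_integral_triangle_eq_0)
  have line: "C (-(r * \<sigma>)) (r * \<sigma>) = integral {-R..R} (\<lambda>s. f (of_real s * \<sigma>) * \<sigma>)"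
    if "\<sigma> \<in> {1, \<omega>}" for \<sigma>
    unfolding C_def r_def
  proof (rule contour_integral_symmetric_linepath[OF R])
    have "of_real s * \<sigma> \<in> slope_sector \<tau>" for s
      using that \<tau> line_in_slope_sector[of 0 \<tau> s] line_in_slope_sector[of \<tau> \<tau> s]
      by (auto simp: \<omega>_def one_complex.code[symmetric])
    then show "continuous_on UNIV (\<lambda>s::real. f (of_real s * \<sigma>))"
      by (intro continuous_on_compose2[OF cont]) (auto intro!: continuous_intros)
  qed
  have "closed_segment (-r) r \<subseteq> slope_sector \<tau>" "closed_segment 0 (-r) \<subseteq> slope_sector \<tau>"
    using closed_segment_on_line_subset_slope_sector[of 0 \<tau> "-R" R]
      closed_segment_on_line_subset_slope_sector[of 0 \<tau> 0 "-R"] \<tau>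
    by (simp_all add: r_def one_complex.code[symmetric])
  moreover have "closed_segment (-(r * \<omega>)) (r * \<omega>) \<subseteq> slope_sector \<tau>"
    "closed_segment 0 (r * \<omega>) \<subseteq> slope_sector \<tau>"
    using closed_segment_on_line_subset_slope_sector[of \<tau> \<tau> "-R" R]
      closed_segment_on_line_subset_slope_sector[of \<tau> \<tau> 0 R] \<tau>
    by (simp_all add: r_def \<omega>_def)
  ultimately have "C (-r) r = C (-r) 0 + C 0 r" "C (-(r * \<omega>)) (r * \<omega>) = C (-(r * \<omega>)) 0 + C 0 (r * \<omega>)"
    "C 0 (-r) = - C (-r) 0" "C 0 (r * \<omega>) = - C (r * \<omega>) 0"
    using midpoint_in_closed_segment[of "-r" r] midpoint_in_closed_segment[of "-(r * \<omega>)" "r * \<omega>"]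
    unfolding C_def midpoint_def
    by (simp_all add: contour_integral_split_linepath contour_integral_reverse_linepath
        continuous_on_subset[OF cont])
  moreover have "C (-r) r = integral {-R..R} (\<lambda>y. f (of_real y))"
    using line[of 1] by simp
  moreover have "C (-(r * \<omega>)) (r * \<omega>) = integral {-R..R} (\<lambda>s. f (of_real s * \<omega>) * \<omega>)"
    using line[of \<omega>] by simp
  ultimately have "integral {-R..R} (\<lambda>y. f (of_real y))
                     - integral {-R..R} (\<lambda>s. f (of_real s * \<omega>) * \<omega>)
                   = C (-r) (-(r * \<omega>)) - C r (r * \<omega>)"
    using Tp Tm by algebra
  then show ?thesis unfolding C_def r_def \<omega>_def .
qed

lemma vertical_side_in_slope_sector:
  assumes \<tau>: "0 \<le> \<tau>" "\<tau> \<le> 1/2" and R: "R > 0" and e: "e \<in> {1, -1}"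
    and z: "z \<in> closed_segment (e * of_real R) (e * (of_real R * Complex 1 \<tau>))"
  shows "z \<in> slope_sector \<tau>" "R \<le> norm z" "norm z \<le> 2 * R"
proof -
  obtain u where u: "0 \<le> u" "u \<le> 1"
    and "z = (1 - u) *\<^sub>R (e * of_real R) + u *\<^sub>R (e * (of_real R * Complex 1 \<tau>))"
    using z by (auto simp: in_segment)
  then have "z = e * of_real R * ((1 - of_real u) + of_real u * Complex 1 \<tau>)"
    by (simp add: scaleR_conv_of_real algebra_simps)
  also have "(1 - of_real u) + of_real u * Complex 1 \<tau> = Complex 1 (u * \<tau>)"
    by (simp add: complex_eq_iff)
  finally have z_eq: "z = e * (of_real R * Complex 1 (u * \<tau>))" by (simp only: mult.assoc)
  have u\<tau>: "0 \<le> u * \<tau>" "u * \<tau> \<le> \<tau>" "\<bar>u * \<tau>\<bar> \<le> 1"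
    using u \<tau> mult_left_le_one_le[of \<tau> u] by auto
  have "of_real R * Complex 1 (u * \<tau>) \<in> slope_sector \<tau>"
    using u\<tau>(1,2) by (rule line_in_slope_sector)
  then show "z \<in> slope_sector \<tau>" using z_eq e by (cases "e = 1") simp_all
  have "norm z = R * norm (Complex 1 (u * \<tau>))"
    using z_eq e R by (auto simp: norm_mult)
  then show "R \<le> norm z" "norm z \<le> 2 * R"
    using R norm_Complex_one_bounds[OF u\<tau>(3)] mult_left_mono[of 1 "norm (Complex 1 (u * \<tau>))" R]
      mult_left_mono[of "norm (Complex 1 (u * \<tau>))" 2 R]
    by auto
qed

lemma norm_contour_integral_vertical_side_le:
  fixes f :: "complex \<Rightarrow> complex"
  assumes \<tau>: "0 \<le> \<tau>" "\<tau> \<le> 1/2" and R: "R > 0" and e: "e \<in> {1, -1}"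
    and cont: "continuous_on (slope_sector \<tau>) f"
    and bound: "\<And>z. z \<in> slope_sector \<tau> \<Longrightarrow> norm (f z) \<le> C * exp (- \<delta> * (norm z)\<^sup>2 + K * norm z)"
    and \<delta>: "\<delta> \<ge> 0" and K: "K \<ge> 0"
  shows "norm (contour_integral (linepath (e * of_real R) (e * (of_real R * Complex 1 \<tau>))) f)
           \<le> C * exp (- \<delta> * R\<^sup>2 + 2 * K * R) * (R * \<tau>)"
proof -
  define a b where "a = e * of_real R" and "b = e * (of_real R * Complex 1 \<tau>)"
  note on_side = vertical_side_in_slope_sector[OF \<tau> R e, folded a_def b_def]
  have C: "C \<ge> 0"
    using bound[of 0] by (simp add: mem_slope_sector_iff wedge_def) (meson norm_ge_zero order_trans)
  have "norm (contour_integral (linepath a b) f) \<le> C * exp (- \<delta> * R\<^sup>2 + 2 * K * R) * norm (b - a)"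
  proof (rule contour_integral_bound_linepath)
    show "f contour_integrable_on linepath a b"
      using on_side(1) by (intro contour_integrable_continuous_linepath continuous_on_subset[OF cont]) auto
    show "0 \<le> C * exp (- \<delta> * R\<^sup>2 + 2 * K * R)" using C by simp
    show "norm (f z) \<le> C * exp (- \<delta> * R\<^sup>2 + 2 * K * R)" if "z \<in> closed_segment a b" for z
    proof -
      note z = on_side[OF that]
      have "R\<^sup>2 \<le> (norm z)\<^sup>2" using z(2) R by (intro power_mono) auto
      then have "- \<delta> * (norm z)\<^sup>2 \<le> - \<delta> * R\<^sup>2" using mult_left_mono[OF _ \<delta>] by simp
      moreover have "K * norm z \<le> 2 * K * R" using mult_left_mono[OF z(3) K] by simp
      ultimately have "- \<delta> * (norm z)\<^sup>2 + K * norm z \<le> - \<delta> * R\<^sup>2 + 2 * K * R" by linarith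
      then show ?thesis
        using bound[OF z(1)] mult_left_mono[OF _ C] by (meson exp_le_cancel_iff order_trans)
    qed
  qed
  moreover have "norm (b - a) = R * \<tau>"
  proof -
    have "b - a = e * of_real R * (Complex 1 \<tau> - 1)"
      by (simp add: a_def b_def algebra_simps)
    also have "Complex 1 \<tau> - 1 = of_real \<tau> * \<i>" by (simp add: complex_eq_iff)
    finally show ?thesis using e R \<tau> by (auto simp: norm_mult)
  qed
  ultimately show ?thesis by (simp add: a_def b_def)
qed

lemma norm_interval_integral_minus_rotated_le:
  fixes f :: "complex \<Rightarrow> complex"
  assumes \<tau>: "0 \<le> \<tau>" "\<tau> \<le> 1/2" and R: "R > 0" and holo: "f holomorphic_on slope_sector \<tau>"
    and bound: "\<And>z. z \<in> slope_sector \<tau> \<Longrightarrow> norm (f z) \<le> C * exp (- \<delta> * (norm z)\<^sup>2 + K * norm z)"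
    and \<delta>: "\<delta> \<ge> 0" and K: "K \<ge> 0"
  shows "norm (integral {-R..R} (\<lambda>y. f (of_real y))
                 - integral {-R..R} (\<lambda>s. f (of_real s * Complex 1 \<tau>) * Complex 1 \<tau>))
           \<le> 2 * C * \<tau> * (R * exp (- \<delta> * R\<^sup>2 + 2 * K * R))"
proof -
  define side where "side = (\<lambda>e. contour_integral (linepath (e * of_real R) (e * (of_real R * Complex 1 \<tau>))) f)"
  have cont: "continuous_on (slope_sector \<tau>) f"
    using holo by (rule holomorphic_on_imp_continuous_on)
  have "norm (integral {-R..R} (\<lambda>y. f (of_real y))
                - integral {-R..R} (\<lambda>s. f (of_real s * Complex 1 \<tau>) * Complex 1 \<tau>))
          = norm (side (-1) - side 1)"
    unfolding side_def using interval_integral_minus_rotated_eq_sides[OF \<tau>(1) R holo] by simp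
  also have "\<dots> \<le> norm (side (-1)) + norm (side 1)"
    by (rule norm_triangle_ineq4)
  also have "\<dots> \<le> 2 * (C * exp (- \<delta> * R\<^sup>2 + 2 * K * R) * (R * \<tau>))"
    using norm_contour_integral_vertical_side_le[OF \<tau> R _ cont bound \<delta> K, of "-1"]
      norm_contour_integral_vertical_side_le[OF \<tau> R _ cont bound \<delta> K, of 1]
    unfolding side_def by simp
  finally show ?thesis by (simp add: algebra_simps)
qed

lemma integrable_on_line_of_gaussian_bound:
  fixes f :: "complex \<Rightarrow> complex"
  assumes cont: "continuous_on UNIV (\<lambda>s::real. f (of_real s * \<omega>))"
    and bound: "\<And>s. norm (f (of_real s * \<omega>))
                       \<le> C * exp (- \<delta> * (norm (of_real s * \<omega>))\<^sup>2 + K * norm (of_real s * \<omega>))"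
    and \<delta>: "\<delta> > 0" and K: "K \<ge> 0" and \<omega>: "1 \<le> norm \<omega>" "norm \<omega> \<le> 2"
  shows "integrable lborel (\<lambda>s. f (of_real s * \<omega>) * \<omega>)"
proof (rule Bochner_Integration.integrable_bound)
  show "integrable lborel (\<lambda>s. 2 * C * exp (- \<delta> * s\<^sup>2 + (2 * K) * \<bar>s\<bar>))"
    using integrable_exp_neg_square_plus_abs[OF \<delta>] by (intro integrable_mult_right)
  have "continuous_on UNIV (\<lambda>s::real. f (of_real s * \<omega>) * \<omega>)"
    using cont by (intro continuous_intros)
  then show "(\<lambda>s. f (of_real s * \<omega>) * \<omega>) \<in> borel_measurable lborel"
    using borel_measurable_continuous_onI by simp
  have C: "C \<ge> 0" using bound[of 0] by simp (meson norm_ge_zero order_trans)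
  show "AE s in lborel. norm (f (of_real s * \<omega>) * \<omega>) \<le> norm (2 * C * exp (- \<delta> * s\<^sup>2 + (2 * K) * \<bar>s\<bar>))"
  proof (rule AE_I2)
    fix s :: real
    have ns: "norm (of_real s * \<omega>) = \<bar>s\<bar> * norm \<omega>" by (simp add: norm_mult)
    have "s\<^sup>2 * 1 \<le> s\<^sup>2 * (norm \<omega>)\<^sup>2"
      using \<omega> by (intro mult_left_mono) (auto simp: one_le_power)
    then have "\<delta> * s\<^sup>2 \<le> \<delta> * (norm (of_real s * \<omega>))\<^sup>2"
      using \<delta> by (intro mult_left_mono) (auto simp: ns power_mult_distrib)
    moreover have "K * norm (of_real s * \<omega>) \<le> (2 * K) * \<bar>s\<bar>"
      using \<omega> K unfolding ns by (simp add: mult_left_mono mult.commute mult.left_commute)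
    ultimately have "- \<delta> * (norm (of_real s * \<omega>))\<^sup>2 + K * norm (of_real s * \<omega>)
                       \<le> - \<delta> * s\<^sup>2 + (2 * K) * \<bar>s\<bar>"
      by linarith
    then have "norm (f (of_real s * \<omega>)) \<le> C * exp (- \<delta> * s\<^sup>2 + (2 * K) * \<bar>s\<bar>)"
      using bound[of s] mult_left_mono[OF _ C] by (meson exp_le_cancel_iff order_trans)
    then have "norm (f (of_real s * \<omega>)) * norm \<omega> \<le> C * exp (- \<delta> * s\<^sup>2 + (2 * K) * \<bar>s\<bar>) * 2"
      using \<omega> C by (intro mult_mono) auto
    then show "norm (f (of_real s * \<omega>) * \<omega>) \<le> norm (2 * C * exp (- \<delta> * s\<^sup>2 + (2 * K) * \<bar>s\<bar>))"
      using C by (simp add: norm_mult)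
  qed
qed

lemma integral_real_line_eq_integral_rotated_line:
  fixes f :: "complex \<Rightarrow> complex"
  assumes \<tau>: "0 \<le> \<tau>" "\<tau> \<le> 1/2" and holo: "f holomorphic_on slope_sector \<tau>"
    and bound: "\<And>z. z \<in> slope_sector \<tau> \<Longrightarrow> norm (f z) \<le> C * exp (- \<delta> * (norm z)\<^sup>2 + K * norm z)"
    and \<delta>: "\<delta> > 0" and K: "K \<ge> 0"
  shows "(LINT y|lborel. f (of_real y)) = (LINT s|lborel. f (of_real s * Complex 1 \<tau>) * Complex 1 \<tau>)"
proof -
  have cont: "continuous_on (slope_sector \<tau>) f"
    using holo by (rule holomorphic_on_imp_continuous_on)
  have integrable: "integrable lborel (\<lambda>s. f (of_real s * Complex 1 \<sigma>) * Complex 1 \<sigma>)"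
    if "0 \<le> \<sigma>" "\<sigma> \<le> \<tau>" for \<sigma>
  proof (rule integrable_on_line_of_gaussian_bound[OF _ _ \<delta> K])
    show "continuous_on UNIV (\<lambda>s::real. f (of_real s * Complex 1 \<sigma>))"
      using line_in_slope_sector[OF that]
      by (intro continuous_on_compose2[OF cont]) (auto intro!: continuous_intros)
    show "1 \<le> norm (Complex 1 \<sigma>)" "norm (Complex 1 \<sigma>) \<le> 2"
      using that \<tau> by (auto intro: norm_Complex_one_bounds)
  qed (use bound line_in_slope_sector[OF that] in auto)
  define A where "A = (\<lambda>n::nat. integral {- real n..real n} (\<lambda>y. f (of_real y)))"
  define B where "B = (\<lambda>n::nat. integral {- real n..real n} (\<lambda>s. f (of_real s * Complex 1 \<tau>) * Complex 1 \<tau>))"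
  have "A \<longlonglongrightarrow> (LINT y|lborel. f (of_real y))"
    unfolding A_def using integrable[of 0] \<tau>
    by (intro tendsto_integral_symmetric_interval) (simp add: one_complex.code[symmetric])
  moreover have "B \<longlonglongrightarrow> (LINT s|lborel. f (of_real s * Complex 1 \<tau>) * Complex 1 \<tau>)"
    unfolding B_def using integrable[of \<tau>] \<tau> by (intro tendsto_integral_symmetric_interval) simp
  ultimately have "(\<lambda>n. A n - B n) \<longlonglongrightarrow>
      (LINT y|lborel. f (of_real y)) - (LINT s|lborel. f (of_real s * Complex 1 \<tau>) * Complex 1 \<tau>)"
    by (rule tendsto_diff)
  moreover have "(\<lambda>n. A n - B n) \<longlonglongrightarrow> 0"
  proof (rule Lim_null_comparison)
    show "\<forall>\<^sub>F n in sequentially. norm (A n - B n)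
                 \<le> 2 * C * \<tau> * (real n * exp (- \<delta> * (real n)\<^sup>2 + 2 * K * real n))"
      using norm_interval_integral_minus_rotated_le[OF \<tau> _ holo bound less_imp_le[OF \<delta>] K]
      unfolding A_def B_def eventually_sequentially by (intro exI[of _ 1]) simp
    show "(\<lambda>n. 2 * C * \<tau> * (real n * exp (- \<delta> * (real n)\<^sup>2 + 2 * K * real n))) \<longlonglongrightarrow> 0"
      using \<delta> by (intro tendsto_mult_right_zero) real_asymp
  qed
  ultimately show ?thesis using LIMSEQ_unique by fastforce
qed

lemma gaussian_bound_on_rotated_line:
  fixes h :: "complex \<Rightarrow> complex"
  assumes \<tau>: "0 \<le> \<tau>" "\<tau> \<le> 1/2" and a: "a \<ge> 0" and K: "K \<ge> 0"
    and bound: "norm (h (of_real s * Complex 1 \<tau>))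
                  \<le> C * exp (- a * Im ((of_real s * Complex 1 \<tau> - of_real x)\<^sup>2)
                             + K * norm (of_real s * Complex 1 \<tau>))"
  shows "norm (h (of_real s * Complex 1 \<tau>) * Complex 1 \<tau>)
           \<le> 2 * C * exp (- (2 * a * \<tau>) * s\<^sup>2 + (2 * a * \<tau> * \<bar>x\<bar> + 2 * K) * \<bar>s\<bar>)"
proof -
  define z where "z = of_real s * Complex 1 \<tau>"
  have \<omega>: "norm (Complex 1 \<tau>) \<le> 2" using \<tau> by (intro norm_Complex_one_bounds) auto
  have "- a * Im ((z - of_real x)\<^sup>2) = - (2 * a * \<tau>) * s\<^sup>2 + 2 * a * \<tau> * (x * s)"
    by (simp add: z_def power2_eq_square algebra_simps)
  moreover have "2 * a * \<tau> * (x * s) \<le> 2 * a * \<tau> * (\<bar>x\<bar> * \<bar>s\<bar>)"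
    using a \<tau> by (intro mult_left_mono) (auto simp: abs_mult[symmetric])
  moreover have "K * norm z \<le> K * (2 * \<bar>s\<bar>)"
    using \<omega> K by (intro mult_left_mono) (auto simp: z_def norm_mult mult.commute mult_left_mono)
  ultimately have exponent: "- a * Im ((z - of_real x)\<^sup>2) + K * norm z
                               \<le> - (2 * a * \<tau>) * s\<^sup>2 + (2 * a * \<tau> * \<bar>x\<bar> + 2 * K) * \<bar>s\<bar>"
    by (simp add: algebra_simps)
  have C: "C \<ge> 0" using bound by (meson exp_gt_zero norm_ge_zero order_trans zero_le_mult_iff not_le)
  have "norm (h z) \<le> C * exp (- (2 * a * \<tau>) * s\<^sup>2 + (2 * a * \<tau> * \<bar>x\<bar> + 2 * K) * \<bar>s\<bar>)"
    using bound exponent mult_left_mono[OF _ C] unfolding z_def[symmetric]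
    by (meson exp_le_cancel_iff order_trans)
  then have "norm (h z) * norm (Complex 1 \<tau>)
               \<le> C * exp (- (2 * a * \<tau>) * s\<^sup>2 + (2 * a * \<tau> * \<bar>x\<bar> + 2 * K) * \<bar>s\<bar>) * 2"
    using \<omega> C by (intro mult_mono) auto
  then show ?thesis by (simp add: z_def norm_mult mult_ac)
qed

lemma regularized_bound_on_slope_sector:
  fixes h :: "complex \<Rightarrow> complex"
  assumes \<tau>: "\<tau> \<le> 1/2" and z: "z \<in> slope_sector \<tau>" and a: "a \<ge> 0" and \<epsilon>: "\<epsilon> \<ge> 0"
    and bound: "norm (h z) \<le> C * exp (- a * Im ((z - of_real x)\<^sup>2) + K * norm z)"
  shows "norm (exp (- of_real \<epsilon> * z\<^sup>2) * h z)
           \<le> C * exp (- (\<epsilon> / 2) * (norm z)\<^sup>2 + (2 * a * \<bar>x\<bar> + K) * norm z)"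
proof -
  have C: "C \<ge> 0" using bound by (meson exp_gt_zero norm_ge_zero order_trans zero_le_mult_iff not_le)
  have "norm (exp (- of_real \<epsilon> * z\<^sup>2)) = exp (- \<epsilon> * Re (z\<^sup>2))" by (simp add: norm_exp_eq_Re)
  also have "\<dots> \<le> exp (- (\<epsilon> / 2) * (norm z)\<^sup>2)"
    using Re_power2_ge_on_slope_sector[OF \<tau> z] \<epsilon> mult_left_mono by fastforce
  finally have gauss: "norm (exp (- of_real \<epsilon> * z\<^sup>2)) \<le> exp (- (\<epsilon> / 2) * (norm z)\<^sup>2)" .
  have "- a * Im ((z - of_real x)\<^sup>2) \<le> 2 * a * \<bar>x\<bar> * norm z"
    using mult_left_mono[OF Im_shifted_power2_ge_on_slope_sector[OF z, of x] a] by simp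
  then have "norm (h z) \<le> C * exp (2 * a * \<bar>x\<bar> * norm z + K * norm z)"
    using bound mult_left_mono[OF _ C] by (meson add_right_mono exp_le_cancel_iff order_trans)
  then have "norm (exp (- of_real \<epsilon> * z\<^sup>2) * h z)
               \<le> exp (- (\<epsilon> / 2) * (norm z)\<^sup>2) * (C * exp (2 * a * \<bar>x\<bar> * norm z + K * norm z))"
    unfolding norm_mult using gauss by (intro mult_mono) auto
  also have "\<dots> = C * (exp (- (\<epsilon> / 2) * (norm z)\<^sup>2) * exp (2 * a * \<bar>x\<bar> * norm z + K * norm z))"
    by (simp only: mult_ac)
  also have "\<dots> = C * exp (- (\<epsilon> / 2) * (norm z)\<^sup>2 + (2 * a * \<bar>x\<bar> + K) * norm z)"
    by (simp only: exp_add[symmetric] distrib_right)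
  finally show ?thesis .
qed

lemma regularized_integral_eq_rotated:
  fixes h :: "complex \<Rightarrow> complex"
  assumes \<tau>: "0 \<le> \<tau>" "\<tau> \<le> 1/2" and holo: "h holomorphic_on slope_sector \<tau>"
    and a: "a \<ge> 0" and K: "K \<ge> 0" and \<epsilon>: "\<epsilon> > 0"
    and bound: "\<And>z. z \<in> slope_sector \<tau> \<Longrightarrow>
                      norm (h z) \<le> C * exp (- a * Im ((z - of_real x)\<^sup>2) + K * norm z)"
  shows "(LINT y|lborel. of_real (exp (- \<epsilon> * y\<^sup>2)) * h (of_real y))
         = (LINT s|lborel. exp (- of_real \<epsilon> * (of_real s * Complex 1 \<tau>)\<^sup>2)
                             * h (of_real s * Complex 1 \<tau>) * Complex 1 \<tau>)"
proof -
  define f where "f = (\<lambda>z. exp (- of_real \<epsilon> * z\<^sup>2) * h z)"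
  have "(LINT y|lborel. of_real (exp (- \<epsilon> * y\<^sup>2)) * h (of_real y)) = (LINT y|lborel. f (of_real y))"
    by (simp add: f_def exp_of_real[symmetric])
  also have "\<dots> = (LINT s|lborel. f (of_real s * Complex 1 \<tau>) * Complex 1 \<tau>)"
  proof (rule integral_real_line_eq_integral_rotated_line[OF \<tau>])
    show "f holomorphic_on slope_sector \<tau>" unfolding f_def using holo by (intro holomorphic_intros)
    show "norm (f z) \<le> C * exp (- (\<epsilon> / 2) * (norm z)\<^sup>2 + (2 * a * \<bar>x\<bar> + K) * norm z)"
      if "z \<in> slope_sector \<tau>" for z
      unfolding f_def using \<tau> that a \<epsilon> bound[OF that] by (intro regularized_bound_on_slope_sector) auto
  qed (use \<epsilon> a K in auto)
  finally show ?thesis by (simp add: f_def)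
qed

lemma norm_exp_neg_square_on_line_le_one:
  assumes "\<epsilon> \<ge> 0" "\<bar>\<sigma>\<bar> \<le> 1"
  shows "norm (exp (- of_real \<epsilon> * (of_real s * Complex 1 \<sigma>)\<^sup>2)) \<le> 1"
proof -
  have "Re ((of_real s * Complex 1 \<sigma>)\<^sup>2) = s\<^sup>2 * (1 - \<sigma>\<^sup>2)"
    by (simp add: power2_eq_square algebra_simps)
  moreover have "\<sigma>\<^sup>2 \<le> 1" using assms(2) by (simp add: abs_square_le_1)
  ultimately show ?thesis using assms(1) by (simp add: norm_exp_eq_Re)
qed

text \<open>Once rotated, the kernel alone decays on the line, so the limit \<open>\<epsilon> \<rightarrow> 0\<close> is dominated.\<close>

lemma tendsto_regularized_integral_rotated:
  fixes h :: "complex \<Rightarrow> complex"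
  assumes \<tau>: "0 < \<tau>" "\<tau> \<le> 1/2" and holo: "h holomorphic_on slope_sector \<tau>"
    and a: "a > 0" and K: "K \<ge> 0"
    and bound: "\<And>z. z \<in> slope_sector \<tau> \<Longrightarrow>
                      norm (h z) \<le> C * exp (- a * Im ((z - of_real x)\<^sup>2) + K * norm z)"
  shows "((\<lambda>\<epsilon>. LINT y|lborel. of_real (exp (- \<epsilon> * y\<^sup>2)) * h (of_real y))
           \<longlongrightarrow> (LINT s|lborel. h (of_real s * Complex 1 \<tau>) * Complex 1 \<tau>)) (at_right 0)"
proof -
  define \<omega> where "\<omega> = Complex 1 \<tau>"
  define \<Phi> where "\<Phi> = (\<lambda>\<epsilon> s. exp (- of_real \<epsilon> * (of_real s * \<omega>)\<^sup>2) * h (of_real s * \<omega>) * \<omega>)"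
  have cont: "continuous_on (slope_sector \<tau>) h"
    using holo by (rule holomorphic_on_imp_continuous_on)
  have on_line: "of_real s * \<omega> \<in> slope_sector \<tau>" for s
    using \<tau> by (simp add: \<omega>_def line_in_slope_sector)
  have "((\<lambda>\<epsilon>. integral\<^sup>L lborel (\<Phi> \<epsilon>)) \<longlongrightarrow> (LINT s|lborel. h (of_real s * \<omega>) * \<omega>)) (at 0 within {0<..})"
  proof (rule integral_dominated_convergence_at_within
      [where w="\<lambda>s. 2 * C * exp (- (2 * a * \<tau>) * s\<^sup>2 + (2 * a * \<tau> * \<bar>x\<bar> + 2 * K) * \<bar>s\<bar>)"])
    show "(0::real) islimpt {0<..}"
      using trivial_limit_within[of "0::real" "{0<..}"] trivial_limit_at_right_real by auto
    show "\<Phi> \<epsilon> \<in> borel_measurable lborel" for \<epsilon>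
    proof -
      have "continuous_on UNIV (\<lambda>s::real. h (of_real s * \<omega>))"
        using on_line by (intro continuous_on_compose2[OF cont]) (auto intro!: continuous_intros)
      then have "continuous_on UNIV (\<Phi> \<epsilon>)" unfolding \<Phi>_def by (intro continuous_intros)
      then show ?thesis using borel_measurable_continuous_onI by simp
    qed
    show "integrable lborel (\<lambda>s. 2 * C * exp (- (2 * a * \<tau>) * s\<^sup>2 + (2 * a * \<tau> * \<bar>x\<bar> + 2 * K) * \<bar>s\<bar>))"
      using a \<tau> by (intro integrable_mult_right integrable_exp_neg_square_plus_abs) auto
    show "((\<lambda>\<epsilon>. \<Phi> \<epsilon> s) \<longlongrightarrow> h (of_real s * \<omega>) * \<omega>) (at 0 within {0<..})" for s
    proof -
      have "((\<lambda>\<epsilon>. \<Phi> \<epsilon> s) \<longlongrightarrow> exp (- of_real 0 * (of_real s * \<omega>)\<^sup>2) * h (of_real s * \<omega>) * \<omega>)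
              (at 0 within {0<..})"
        unfolding \<Phi>_def by (intro tendsto_intros)
      then show ?thesis by simp
    qed
    show "norm (\<Phi> \<epsilon> s) \<le> 2 * C * exp (- (2 * a * \<tau>) * s\<^sup>2 + (2 * a * \<tau> * \<bar>x\<bar> + 2 * K) * \<bar>s\<bar>)"
      if "\<epsilon> \<in> {0<..} - {0}" for \<epsilon> s
    proof -
      have decay: "norm (exp (- of_real \<epsilon> * (of_real s * \<omega>)\<^sup>2)) \<le> 1"
        using that \<tau> unfolding \<omega>_def by (intro norm_exp_neg_square_on_line_le_one) auto
      have "norm (h (of_real s * \<omega>) * \<omega>)
          \<le> 2 * C * exp (- (2 * a * \<tau>) * s\<^sup>2 + (2 * a * \<tau> * \<bar>x\<bar> + 2 * K) * \<bar>s\<bar>)"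
        unfolding \<omega>_def using \<tau> a K bound[OF on_line[of s, unfolded \<omega>_def]]
        by (intro gaussian_bound_on_rotated_line) auto
      then have "norm (exp (- of_real \<epsilon> * (of_real s * \<omega>)\<^sup>2)) * norm (h (of_real s * \<omega>) * \<omega>)
          \<le> 1 * (2 * C * exp (- (2 * a * \<tau>) * s\<^sup>2 + (2 * a * \<tau> * \<bar>x\<bar> + 2 * K) * \<bar>s\<bar>))"
        using decay by (intro mult_mono) auto
      then show ?thesis by (simp add: \<Phi>_def norm_mult mult.assoc)
    qed
  qed
  moreover have "\<forall>\<^sub>F \<epsilon> in at_right 0. integral\<^sup>L lborel (\<Phi> \<epsilon>)
                    = (LINT y|lborel. of_real (exp (- \<epsilon> * y\<^sup>2)) * h (of_real y))"
    using regularized_integral_eq_rotated[OF _ \<tau>(2) holo _ K _ bound] \<tau> a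
    by (auto simp: eventually_at_right_less eventually_at_filter \<Phi>_def \<omega>_def)
  ultimately show ?thesis unfolding \<omega>_def by (simp add: tendsto_cong)
qed

lemma holomorphic_on_rotated_line_integral:
  fixes h :: "complex \<Rightarrow> complex \<Rightarrow> complex"
  assumes \<tau>: "0 < \<tau>" "\<tau> \<le> 1/2" and U: "open U" and a: "a > 0"
    and cont: "\<And>\<kappa>. \<kappa> \<in> U \<Longrightarrow> continuous_on (slope_sector \<tau>) (h \<kappa>)"
    and holo: "\<And>z. z \<in> slope_sector \<tau> \<Longrightarrow> (\<lambda>\<kappa>. h \<kappa> z) holomorphic_on U"
    and local_bound: "\<And>\<kappa>0. \<kappa>0 \<in> U \<Longrightarrow> \<exists>r>0. \<exists>C K. cball \<kappa>0 r \<subseteq> U \<and> K \<ge> 0 \<and>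
         (\<forall>\<kappa>\<in>cball \<kappa>0 r. \<forall>z\<in>slope_sector \<tau>.
            norm (h \<kappa> z) \<le> C * exp (- a * Im ((z - of_real x)\<^sup>2) + K * norm z))"
  shows "(\<lambda>\<kappa>. LINT s|lborel. h \<kappa> (of_real s * Complex 1 \<tau>) * Complex 1 \<tau>) holomorphic_on U"
proof (rule holomorphic_on_lebesgue_integral[OF U])
  have on_line: "of_real s * Complex 1 \<tau> \<in> slope_sector \<tau>" for s
    using \<tau> by (simp add: line_in_slope_sector)
  show "(\<lambda>\<kappa>. h \<kappa> (of_real s * Complex 1 \<tau>) * Complex 1 \<tau>) holomorphic_on U" for s
    using holo[OF on_line] by (intro holomorphic_intros)
  show "(\<lambda>s. h \<kappa> (of_real s * Complex 1 \<tau>) * Complex 1 \<tau>) \<in> borel_measurable lborel"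
    if "\<kappa> \<in> U" for \<kappa>
  proof -
    have "continuous_on UNIV (\<lambda>s::real. h \<kappa> (of_real s * Complex 1 \<tau>) * Complex 1 \<tau>)"
      using on_line by (intro continuous_intros continuous_on_compose2[OF cont[OF that]]) auto
    then show ?thesis using borel_measurable_continuous_onI by simp
  qed
  show "\<exists>r>0. \<exists>w. cball \<kappa>0 r \<subseteq> U \<and> integrable lborel w \<and>
          (\<forall>\<kappa>\<in>cball \<kappa>0 r. \<forall>s. norm (h \<kappa> (of_real s * Complex 1 \<tau>) * Complex 1 \<tau>) \<le> w s)"
    if \<kappa>0: "\<kappa>0 \<in> U" for \<kappa>0
  proof -
    obtain r C K where r: "r > 0" "cball \<kappa>0 r \<subseteq> U" and K: "K \<ge> 0"
      and bound: "\<And>\<kappa> z. \<kappa> \<in> cball \<kappa>0 r \<Longrightarrow> z \<in> slope_sector \<tau> \<Longrightarrow>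
                    norm (h \<kappa> z) \<le> C * exp (- a * Im ((z - of_real x)\<^sup>2) + K * norm z)"
      using local_bound[OF \<kappa>0] by blast
    have "integrable lborel (\<lambda>s. 2 * C * exp (- (2 * a * \<tau>) * s\<^sup>2 + (2 * a * \<tau> * \<bar>x\<bar> + 2 * K) * \<bar>s\<bar>))"
      using a \<tau> by (intro integrable_mult_right integrable_exp_neg_square_plus_abs) auto
    moreover have "norm (h \<kappa> (of_real s * Complex 1 \<tau>) * Complex 1 \<tau>)
        \<le> 2 * C * exp (- (2 * a * \<tau>) * s\<^sup>2 + (2 * a * \<tau> * \<bar>x\<bar> + 2 * K) * \<bar>s\<bar>)"
      if "\<kappa> \<in> cball \<kappa>0 r" for \<kappa> s
      using \<tau> a K bound[OF that on_line] by (intro gaussian_bound_on_rotated_line) auto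
    ultimately show ?thesis using r by blast
  qed
qed

lemma continuous_on_locally_bounded_above:
  fixes f :: "'a::heine_borel \<Rightarrow> real"
  assumes "continuous_on U f" "open U" "x \<in> U"
  obtains r M where "r > 0" "cball x r \<subseteq> U" "\<And>y. y \<in> cball x r \<Longrightarrow> f y \<le> M"
proof -
  obtain r where r: "r > 0" "cball x r \<subseteq> U" using assms(2,3) open_contains_cball by blast
  have "bounded (f ` cball x r)"
    using r assms(1) by (intro compact_imp_bounded compact_continuous_image) (auto elim: continuous_on_subset)
  then obtain M where M: "\<forall>y\<in>cball x r. norm (f y) \<le> M" unfolding bounded_iff by auto
  show ?thesis using r M by (intro that[of r M]) (auto dest: abs_le_D1)
qed

lemma locally_uniform_exponential_bound:
  fixes \<phi> :: "'a::heine_borel \<Rightarrow> complex \<Rightarrow> complex"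
  assumes U: "open U" "\<kappa>0 \<in> U" and A_cont: "continuous_on U A" and B_cont: "continuous_on U B"
    and A_nonneg: "\<And>\<kappa>. \<kappa> \<in> U \<Longrightarrow> A \<kappa> \<ge> 0"
    and bound: "\<And>\<kappa> z. \<kappa> \<in> U \<Longrightarrow> z \<in> S \<Longrightarrow> norm (\<phi> \<kappa> z) \<le> A \<kappa> * exp (B \<kappa> * norm z)"
  obtains r M where "r > 0" "cball \<kappa>0 r \<subseteq> U" "M \<ge> 0"
    "\<And>\<kappa> z. \<kappa> \<in> cball \<kappa>0 r \<Longrightarrow> z \<in> S \<Longrightarrow> norm (\<phi> \<kappa> z) \<le> M * exp (M * norm z)"
proof -
  obtain r M where r: "r > 0" "cball \<kappa>0 r \<subseteq> U"
    and M: "\<And>\<kappa>. \<kappa> \<in> cball \<kappa>0 r \<Longrightarrow> max (A \<kappa>) (B \<kappa>) \<le> M"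
    using continuous_on_locally_bounded_above[OF continuous_on_max[OF A_cont B_cont] U(1,2)] by blast
  show ?thesis
  proof (rule that[OF r])
    show "M \<ge> 0" using M[of \<kappa>0] A_nonneg[OF U(2)] r by auto
    show "norm (\<phi> \<kappa> z) \<le> M * exp (M * norm z)" if "\<kappa> \<in> cball \<kappa>0 r" "z \<in> S" for \<kappa> z
    proof -
      have \<kappa>: "\<kappa> \<in> U" and "A \<kappa> \<le> M" "B \<kappa> \<le> M" using M[OF that(1)] that(1) r by auto
      then have "A \<kappa> * exp (B \<kappa> * norm z) \<le> M * exp (M * norm z)"
        using A_nonneg[OF \<kappa>] by (intro mult_mono) (auto intro: mult_right_mono)
      then show ?thesis using bound[OF \<kappa> that(2)] by linarith
    qed
  qed
qed

lemma assumption_G_slope_sector: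
  assumes "assumption_G T V \<alpha> \<Omega> G"
  obtains \<tau> where "0 < \<tau>" "\<tau> \<le> 1/2" "slope_sector \<tau> \<subseteq> \<Omega>"
proof
  have \<alpha>: "0 < \<alpha>" "\<alpha> < pi / 2" and sector: "double_sector \<alpha> \<subseteq> \<Omega>"
    using assms by (simp_all add: assumption_G_def)
  show "0 < min (1/2) (tan \<alpha>)" using \<alpha> by (simp add: tan_gt_zero)
  show "min (1/2) (tan \<alpha>) \<le> 1/2" by simp
  have "arctan (min (1/2) (tan \<alpha>)) \<le> arctan (tan \<alpha>)" by (intro arctan_monotone') simp
  also have "arctan (tan \<alpha>) = \<alpha>" using \<alpha> by (intro arctan_tan) auto
  finally show "slope_sector (min (1/2) (tan \<alpha>)) \<subseteq> \<Omega>"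
    using slope_sector_subset_double_sector sector by blast
qed

lemma assumption_G_kernel_bound:
  assumes "assumption_G T V \<alpha> \<Omega> G" "t \<in> time_int T"
  obtains a c b where "a > 0" "c \<ge> 0" "b \<ge> 0"
    "\<And>z. z \<in> \<Omega> \<Longrightarrow> norm (G t x z) \<le> c * exp (- a * Im ((z - of_real x)\<^sup>2) + b * norm z)"
proof -
  from assms(1) obtain a :: "real \<Rightarrow> real" and Gt :: "real \<Rightarrow> real \<Rightarrow> complex \<Rightarrow> complex"
    and A0 B0 :: "real \<Rightarrow> real \<Rightarrow> real"
    where a: "\<forall>t \<in> time_int T. a t > 0"
      and factor: "\<forall>t \<in> time_int T. \<forall>x. \<forall>z \<in> \<Omega>.
           G t x z = exp (\<i> * complex_of_real (a t) * (z - complex_of_real x)^2) * Gt t x z \<and>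
           norm (Gt t x z) \<le> A0 t x * exp (B0 t x * norm z)"
      and AB0: "\<forall>t \<in> time_int T. \<forall>x. A0 t x \<ge> 0 \<and> B0 t x \<ge> 0"
    unfolding assumption_G_def by (elim conjE exE) (rule that; assumption)
  show ?thesis
  proof (rule that[of "a t" "A0 t x" "B0 t x"])
    fix z assume z: "z \<in> \<Omega>"
    have "norm (G t x z) = exp (- a t * Im ((z - of_real x)\<^sup>2)) * norm (Gt t x z)"
      using factor assms(2) z by (simp add: norm_mult norm_exp_eq_Re)
    also have "\<dots> \<le> exp (- a t * Im ((z - of_real x)\<^sup>2)) * (A0 t x * exp (B0 t x * norm z))"
      using factor assms(2) z by (intro mult_left_mono) auto
    finally show "norm (G t x z) \<le> A0 t x * exp (- a t * Im ((z - of_real x)\<^sup>2) + B0 t x * norm z)"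
      by (simp only: exp_add mult_ac)
  qed (use a AB0 assms(2) in auto)
qed

lemma norm_mult_le_exp_bounds:
  fixes g f :: complex
  assumes g: "norm g \<le> c * exp (E + b * n)" and f: "norm f \<le> M * exp (N * n)" and c: "c \<ge> 0"
  shows "norm (g * f) \<le> c * M * exp (E + (b + N) * n)"
proof -
  have "norm (g * f) \<le> c * exp (E + b * n) * (M * exp (N * n))"
    unfolding norm_mult using g f c by (intro mult_mono) auto
  then show ?thesis by (simp only: exp_add distrib_right distrib_left mult_ac)
qed

lemma holomorphic_on_rotated_product_integral:
  fixes g :: "complex \<Rightarrow> complex" and \<phi> :: "complex \<Rightarrow> complex \<Rightarrow> complex"
  assumes \<tau>: "0 < \<tau>" "\<tau> \<le> 1/2" and sector: "slope_sector \<tau> \<subseteq> S" and U: "open U"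
    and g: "g holomorphic_on S" and a: "a > 0" and b: "b \<ge> 0" and c: "c \<ge> 0"
    and g_bound: "\<And>z. z \<in> S \<Longrightarrow> norm (g z) \<le> c * exp (- a * Im ((z - of_real x)\<^sup>2) + b * norm z)"
    and phi_holo: "\<And>\<kappa>. \<kappa> \<in> U \<Longrightarrow> \<phi> \<kappa> holomorphic_on S"
    and kappa_holo: "\<And>z. z \<in> S \<Longrightarrow> (\<lambda>\<kappa>. \<phi> \<kappa> z) holomorphic_on U"
    and phi_bound: "\<And>\<kappa> z. \<kappa> \<in> U \<Longrightarrow> z \<in> S \<Longrightarrow> norm (\<phi> \<kappa> z) \<le> A \<kappa> * exp (B \<kappa> * norm z)"
    and A_nonneg: "\<And>\<kappa>. \<kappa> \<in> U \<Longrightarrow> A \<kappa> \<ge> 0"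
    and A_cont: "continuous_on U A" and B_cont: "continuous_on U B"
  shows "(\<lambda>\<kappa>. LINT s|lborel. g (of_real s * Complex 1 \<tau>) * \<phi> \<kappa> (of_real s * Complex 1 \<tau>)
                          * Complex 1 \<tau>) holomorphic_on U"
proof (rule holomorphic_on_rotated_line_integral[OF \<tau> U a])
  show "continuous_on (slope_sector \<tau>) (\<lambda>z. g z * \<phi> \<kappa> z)" if "\<kappa> \<in> U" for \<kappa>
    using g phi_holo[OF that] sector
    by (intro holomorphic_on_imp_continuous_on holomorphic_on_mult) (auto intro: holomorphic_on_subset)
  show "(\<lambda>\<kappa>. g z * \<phi> \<kappa> z) holomorphic_on U" if "z \<in> slope_sector \<tau>" for z
    using kappa_holo that sector by (auto intro!: holomorphic_intros)
  show "\<exists>r>0. \<exists>C K. cball \<kappa>0 r \<subseteq> U \<and> K \<ge> 0 \<and> (\<forall>\<kappa>\<in>cball \<kappa>0 r. \<forall>z\<in>slope_sector \<tau>.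
          norm (g z * \<phi> \<kappa> z) \<le> C * exp (- a * Im ((z - of_real x)\<^sup>2) + K * norm z))"
    if \<kappa>0: "\<kappa>0 \<in> U" for \<kappa>0
  proof -
    obtain r M where r: "r > 0" "cball \<kappa>0 r \<subseteq> U" and "M \<ge> 0"
      and "\<And>\<kappa> z. \<kappa> \<in> cball \<kappa>0 r \<Longrightarrow> z \<in> S \<Longrightarrow> norm (\<phi> \<kappa> z) \<le> M * exp (M * norm z)"
      using locally_uniform_exponential_bound[OF U \<kappa>0 A_cont B_cont A_nonneg phi_bound] by blast
    then show ?thesis
      using g_bound sector c b by (intro exI[of _ r] conjI exI[of _ "c * M"] exI[of _ "b + M"] ballI
          norm_mult_le_exp_bounds) auto
  qed
qed

lemma Psi_eq_rotated_line_integral: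
  assumes G: "assumption_G T V \<alpha> \<Omega> G" and t: "t \<in> time_int T"
    and \<tau>: "0 < \<tau>" "\<tau> \<le> 1/2" and sector: "slope_sector \<tau> \<subseteq> \<Omega>"
    and F: "F holomorphic_on \<Omega>" and F_bound: "\<And>z. z \<in> \<Omega> \<Longrightarrow> norm (F z) \<le> M * exp (N * norm z)"
    and N: "N \<ge> 0"
  shows "Psi G F t x = (LINT s|lborel. G t x (of_real s * Complex 1 \<tau>) * F (of_real s * Complex 1 \<tau>)
                                        * Complex 1 \<tau>)"
proof -
  obtain a c b where a: "a > 0" and c: "c \<ge> 0" and b: "b \<ge> 0"
    and G_bound: "\<And>z. z \<in> \<Omega> \<Longrightarrow> norm (G t x z) \<le> c * exp (- a * Im ((z - of_real x)\<^sup>2) + b * norm z)"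
    using assumption_G_kernel_bound[OF G t, where x=x] by blast
  have "G t x holomorphic_on \<Omega>" using G t by (simp add: assumption_G_def)
  then have "((\<lambda>\<epsilon>. LINT y|lborel. of_real (exp (- \<epsilon> * y\<^sup>2)) * (G t x (of_real y) * F (of_real y)))
           \<longlongrightarrow> (LINT s|lborel. (G t x (of_real s * Complex 1 \<tau>) * F (of_real s * Complex 1 \<tau>))
                                  * Complex 1 \<tau>)) (at_right 0)"
    using sector F G_bound F_bound c b N
    by (intro tendsto_regularized_integral_rotated[OF \<tau> _ a, where C="c * M" and K="b + N"]
        holomorphic_on_mult norm_mult_le_exp_bounds) (auto intro: holomorphic_on_subset)
  then show ?thesis
    unfolding Psi_def by (intro tendsto_Lim) (simp_all add: mult.assoc)
qed

theorem theorem4p7: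
  fixes T :: ereal and V :: "real \<Rightarrow> real \<Rightarrow> complex" and \<alpha> :: real
    and \<Omega> :: "complex set" and G :: "real \<Rightarrow> real \<Rightarrow> complex \<Rightarrow> complex"
    and \<O> :: "complex set" and \<phi> :: "complex \<Rightarrow> complex \<Rightarrow> complex"
    and A B :: "complex \<Rightarrow> real"
  assumes G: "assumption_G T V \<alpha> \<Omega> G"
    and O_open: "open \<O>"
    and phi_holo: "\<And>\<kappa>. \<kappa> \<in> \<O> \<Longrightarrow> (\<phi> \<kappa>) holomorphic_on \<Omega>"
    and phi_bound: "\<And>\<kappa> z. \<kappa> \<in> \<O> \<Longrightarrow> z \<in> \<Omega> \<Longrightarrow> norm (\<phi> \<kappa> z) \<le> A \<kappa> * exp (B \<kappa> * norm z)"
    and A_nonneg: "\<And>\<kappa>. \<kappa> \<in> \<O> \<Longrightarrow> A \<kappa> \<ge> 0"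
    and B_nonneg: "\<And>\<kappa>. \<kappa> \<in> \<O> \<Longrightarrow> B \<kappa> \<ge> 0"
    and A_cont: "continuous_on \<O> A"
    and B_cont: "continuous_on \<O> B"
    and kappa_holo: "\<And>z. z \<in> \<Omega> \<Longrightarrow> (\<lambda>\<kappa>. \<phi> \<kappa> z) holomorphic_on \<O>"
  shows "\<forall>t \<in> time_int T. \<forall>x. (\<lambda>\<kappa>. Psi G (\<phi> \<kappa>) t x) holomorphic_on \<O>"
proof (intro ballI allI)
  fix t x assume t: "t \<in> time_int T"
  obtain \<tau> where \<tau>: "0 < \<tau>" "\<tau> \<le> 1/2" and sector: "slope_sector \<tau> \<subseteq> \<Omega>"
    using assumption_G_slope_sector[OF G] .
  obtain a c b where a: "a > 0" and c: "c \<ge> 0" and b: "b \<ge> 0"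
    and G_bound: "\<And>z. z \<in> \<Omega> \<Longrightarrow> norm (G t x z) \<le> c * exp (- a * Im ((z - of_real x)\<^sup>2) + b * norm z)"
    using assumption_G_kernel_bound[OF G t, where x=x] by blast
  have "G t x holomorphic_on \<Omega>" using G t by (simp add: assumption_G_def)
  then have "(\<lambda>\<kappa>. LINT s|lborel. G t x (of_real s * Complex 1 \<tau>) * \<phi> \<kappa> (of_real s * Complex 1 \<tau>)
                            * Complex 1 \<tau>) holomorphic_on \<O>"
    by (rule holomorphic_on_rotated_product_integral[OF \<tau> sector O_open _ a b c G_bound phi_holo
          kappa_holo phi_bound A_nonneg A_cont B_cont])
  moreover have "(LINT s|lborel. G t x (of_real s * Complex 1 \<tau>) * \<phi> \<kappa> (of_real s * Complex 1 \<tau>)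
                   * Complex 1 \<tau>) = Psi G (\<phi> \<kappa>) t x" if \<kappa>: "\<kappa> \<in> \<O>" for \<kappa>
    by (rule Psi_eq_rotated_line_integral[OF G t \<tau> sector phi_holo[OF \<kappa>] phi_bound[OF \<kappa>]
          B_nonneg[OF \<kappa>], symmetric])
  ultimately show "(\<lambda>\<kappa>. Psi G (\<phi> \<kappa>) t x) holomorphic_on \<O>"
    by (rule holomorphic_transform)
qed

end
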